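(* There is no final $F$-coalgebra in $\mathbf{Met_3}^{L}$.
   Context: A tripointed metric space is a set with three distinct points $T,L,R$ and a metric bounded by $1$ in which $T,L,R$ have pairwise distance $1$. $\mathbf{Met_3}^{L}$: tripointed metric spaces with Lipschitz maps preserving $T,L,R$. Let $M=\{a,b,c\}$. For a tripointed metric space $X$, $M\times X$ has metric $d((m,x),(n,y))=\tfrac12d(x,y)$ if $m=n$ and $1$ otherwise; $M\otimes X$ is the quotient metric space by the equivalence relation generated by $(b,T)\sim(a,L)$, $(a,R)\sim(c,T)$, $(c,L)\sim(b,R)$, with elements $m\otimes x$ and distinguished points $a\otimes T,b\otimes L,c\otimes R$; $F=M\otimes-$ with $(M\otimes f)(m\otimes x)=m\otimes f(x)$. A coalgebra is $(X,e\colon X\to FX)$ with $e$ a morphism; a coalgebra morphism $h\colon(A,\alpha)\to(B,\beta)$ satisfies $\beta\circ h=Fh\circ\alpha$; a coalgebra is final if every coalgebra has a unique coalgebra morphism into it. *)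

theory Defs
  imports Complex_Main
begin

datatype m3 = Ma | Mb | Mc

record 'a tpms =
  tcarrier :: "'a set"
  tdist :: "'a \<Rightarrow> 'a \<Rightarrow> real"
  pT :: 'a
  pL :: 'a
  pR :: 'a

definition is_tpms :: "'a tpms \<Rightarrow> bool" where
  "is_tpms X \<longleftrightarrow>
     pT X \<in> tcarrier X \<and> pL X \<in> tcarrier X \<and> pR X \<in> tcarrier X \<and>
     pT X \<noteq> pL X \<and> pL X \<noteq> pR X \<and> pT X \<noteq> pR X \<and>
     (\<forall>x\<in>tcarrier X. \<forall>y\<in>tcarrier X.
        0 \<le> tdist X x y \<and> tdist X x y \<le> 1 \<and>
        (tdist X x y = 0 \<longleftrightarrow> x = y) \<and> tdist X x y = tdist X y x) \<and>
     (\<forall>x\<in>tcarrier X. \<forall>y\<in>tcarrier X. \<forall>z\<in>tcarrier X.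
        tdist X x z \<le> tdist X x y + tdist X y z) \<and>
     tdist X (pT X) (pL X) = 1 \<and> tdist X (pL X) (pR X) = 1 \<and> tdist X (pT X) (pR X) = 1"

definition lip_morph :: "'a tpms \<Rightarrow> 'b tpms \<Rightarrow> ('a \<Rightarrow> 'b) \<Rightarrow> bool" where
  "lip_morph X Y f \<longleftrightarrow>
     f ` tcarrier X \<subseteq> tcarrier Y \<and>
     f (pT X) = pT Y \<and> f (pL X) = pL Y \<and> f (pR X) = pR Y \<and>
     (\<exists>K. \<forall>x\<in>tcarrier X. \<forall>y\<in>tcarrier X. tdist Y (f x) (f y) \<le> K * tdist X x y)"

definition prod_carrier :: "'a tpms \<Rightarrow> (m3 \<times> 'a) set" where
  "prod_carrier X = UNIV \<times> tcarrier X"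

definition prod_dist :: "'a tpms \<Rightarrow> (m3 \<times> 'a) \<Rightarrow> (m3 \<times> 'a) \<Rightarrow> real" where
  "prod_dist X p q = (if fst p = fst q then tdist X (snd p) (snd q) / 2 else 1)"

definition glue :: "'a tpms \<Rightarrow> ((m3 \<times> 'a) \<times> (m3 \<times> 'a)) set" where
  "glue X = {((Mb, pT X), (Ma, pL X)), ((Ma, pR X), (Mc, pT X)), ((Mc, pL X), (Mb, pR X))}"

definition glue_eq :: "'a tpms \<Rightarrow> ((m3 \<times> 'a) \<times> (m3 \<times> 'a)) set" where
  "glue_eq X = Id_on (prod_carrier X) \<union> (glue X \<union> (glue X)\<inverse>)\<^sup>+"

definition quot_dist ::
  "('b \<Rightarrow> 'b \<Rightarrow> real) \<Rightarrow> ('b \<times> 'b) set \<Rightarrow> 'b set \<Rightarrow> 'b set \<Rightarrow> 'b set \<Rightarrow> real" where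
  "quot_dist d E P A B = Inf {sum_list (map (\<lambda>(p, q). d p q) cs) | cs.
      cs \<noteq> [] \<and> set cs \<subseteq> P \<times> P \<and> fst (hd cs) \<in> A \<and> snd (last cs) \<in> B \<and>
      (\<forall>i. i + 1 < length cs \<longrightarrow> (snd (cs ! i), fst (cs ! (i + 1))) \<in> E)}"

text \<open>The object part of the functor F = M \<otimes> -; elements m \<otimes> x are equivalence classes.\<close>
definition tens :: "'a tpms \<Rightarrow> m3 \<Rightarrow> 'a \<Rightarrow> (m3 \<times> 'a) set" where
  "tens X m x = glue_eq X `` {(m, x)}"

definition Fobj :: "'a tpms \<Rightarrow> (m3 \<times> 'a) set tpms" where
  "Fobj X = \<lparr> tcarrier = prod_carrier X // glue_eq X,
             tdist = quot_dist (prod_dist X) (glue_eq X) (prod_carrier X),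
             pT = tens X Ma (pT X), pL = tens X Mb (pL X), pR = tens X Mc (pR X) \<rparr>"

text \<open>The arrow part: (M \<otimes> f)(m \<otimes> x) = m \<otimes> f x (f : X \<rightarrow> Y).\<close>
definition Fmap :: "'b tpms \<Rightarrow> ('a \<Rightarrow> 'b) \<Rightarrow> (m3 \<times> 'a) set \<Rightarrow> (m3 \<times> 'b) set" where
  "Fmap Y f C = glue_eq Y `` (map_prod id f ` C)"

definition coalg :: "'a tpms \<Rightarrow> ('a \<Rightarrow> (m3 \<times> 'a) set) \<Rightarrow> bool" where
  "coalg X e \<longleftrightarrow> is_tpms X \<and> lip_morph X (Fobj X) e"

definition coalg_morph ::
  "'a tpms \<Rightarrow> ('a \<Rightarrow> (m3 \<times> 'a) set) \<Rightarrow> 'b tpms \<Rightarrow> ('b \<Rightarrow> (m3 \<times> 'b) set) \<Rightarrow> ('a \<Rightarrow> 'b) \<Rightarrow> bool"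
  where
  "coalg_morph A \<alpha> B \<beta> h \<longleftrightarrow>
     lip_morph A B h \<and> (\<forall>x\<in>tcarrier A. \<beta> (h x) = Fmap B h (\<alpha> x))"

text \<open>Finality of (X,e) with respect to all coalgebras whose carrier lives in type 'c
  (uniqueness of morphisms is up to equality on the carrier).\<close>
definition final_for :: "'c itself \<Rightarrow> 'a tpms \<Rightarrow> ('a \<Rightarrow> (m3 \<times> 'a) set) \<Rightarrow> bool" where
  "final_for (_ :: 'c itself) X e \<longleftrightarrow> coalg X e \<and>
     (\<forall>(A :: 'c tpms) \<alpha>. coalg A \<alpha> \<longrightarrow>
        (\<exists>h. coalg_morph A \<alpha> X e h \<and>
             (\<forall>h'. coalg_morph A \<alpha> X e h' \<longrightarrow> (\<forall>x\<in>tcarrier A. h' x = h x))))"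

end

theory Submission
  imports Defs
begin

text \<open>
  Suppose \<open>(X, e)\<close> were final and \<open>e\<close> were \<open>K\<close>-Lipschitz. For small \<open>r > 0\<close> the points
  \<open>{0, 2} \<union> {r^n}\<close> of the line, with \<open>T = 0\<close>, \<open>L = 1\<close>, \<open>R = 2\<close> and \<open>2\<close> at distance \<open>1\<close> from
  everything else, carry the \<open>1/r\<close>-Lipschitz coalgebra structure \<open>r^(n+1) \<mapsto> a \<otimes> r^n\<close>.
  For the induced morphism \<open>h\<close> the points \<open>z\<^sub>n = h (r^n)\<close> satisfy \<open>e z\<^sub>n\<^sub>+\<^sub>1 = a \<otimes> z\<^sub>n\<close>.
  The function that is \<open>d(x, T)/2\<close> on the copy \<open>a\<close> of \<open>X\<close> and \<open>1/2\<close> on the other copies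
  respects the gluing and is \<open>1\<close>-Lipschitz, so it bounds distances to \<open>a \<otimes> T\<close> in \<open>M \<otimes> X\<close>
  from below. Hence \<open>d(z\<^sub>n, T) \<le> 2K d(z\<^sub>n\<^sub>+\<^sub>1, T)\<close>, i.e. \<open>d(z\<^sub>n, T) \<ge> (2K)\<^sup>-\<^sup>n\<close>, whereas
  \<open>d(z\<^sub>n, T) \<le> Lip(h) r^n\<close>; this is impossible for \<open>r < 1/(2K)\<close>.
\<close>

lemma
  assumes "is_tpms X"
  shows tpms_pT_in: "pT X \<in> tcarrier X"
    and tdist_pL_pT: "tdist X (pL X) (pT X) = 1"
    and tdist_pR_pT: "tdist X (pR X) (pT X) = 1"
    and tdist_nonneg: "x \<in> tcarrier X \<Longrightarrow> y \<in> tcarrier X \<Longrightarrow> 0 \<le> tdist X x y"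
    and tdist_le_1: "x \<in> tcarrier X \<Longrightarrow> y \<in> tcarrier X \<Longrightarrow> tdist X x y \<le> 1"
    and tdist_self: "x \<in> tcarrier X \<Longrightarrow> tdist X x x = 0"
    and tdist_triangle: "x \<in> tcarrier X \<Longrightarrow> y \<in> tcarrier X \<Longrightarrow> z \<in> tcarrier X \<Longrightarrow>
      tdist X x z \<le> tdist X x y + tdist X y z"
  using assms unfolding is_tpms_def by metis+

definition quot_chain ::
  "('b \<times> 'b) set \<Rightarrow> 'b set \<Rightarrow> 'b set \<Rightarrow> 'b set \<Rightarrow> ('b \<times> 'b) list \<Rightarrow> bool" where
  "quot_chain E P A B cs \<longleftrightarrow>
     cs \<noteq> [] \<and> set cs \<subseteq> P \<times> P \<and> fst (hd cs) \<in> A \<and> snd (last cs) \<in> B \<and>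
     (\<forall>i. i + 1 < length cs \<longrightarrow> (snd (cs ! i), fst (cs ! (i + 1))) \<in> E)"

definition chain_cost :: "('b \<Rightarrow> 'b \<Rightarrow> real) \<Rightarrow> ('b \<times> 'b) list \<Rightarrow> real" where
  "chain_cost d cs = (\<Sum>(p, q)\<leftarrow>cs. d p q)"

lemma quot_dist_eq_Inf_chain_cost:
  "quot_dist d E P A B = Inf (chain_cost d ` Collect (quot_chain E P A B))"
  unfolding quot_dist_def quot_chain_def chain_cost_def by (rule arg_cong[where f = Inf]) blast

lemma quot_chain_singleton: "a \<in> A \<inter> P \<Longrightarrow> b \<in> B \<inter> P \<Longrightarrow> quot_chain E P A B [(a, b)]"
  unfolding quot_chain_def by simp

lemma quot_dist_le:
  assumes nonneg: "\<And>p q. p \<in> P \<Longrightarrow> q \<in> P \<Longrightarrow> 0 \<le> d p q"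
    and "a \<in> A \<inter> P" "b \<in> B \<inter> P"
  shows "quot_dist d E P A B \<le> d a b"
proof -
  have "chain_cost d [(a, b)] \<in> chain_cost d ` Collect (quot_chain E P A B)"
    using quot_chain_singleton[OF assms(2,3)] by blast
  moreover have "bdd_below (chain_cost d ` Collect (quot_chain E P A B))"
  proof (rule bdd_belowI2)
    fix cs assume "cs \<in> Collect (quot_chain E P A B)"
    then have "set cs \<subseteq> P \<times> P" by (simp add: quot_chain_def)
    then show "0 \<le> chain_cost d cs"
      unfolding chain_cost_def by (intro sum_list_nonneg) (auto intro: nonneg)
  qed
  ultimately show ?thesis
    unfolding quot_dist_eq_Inf_chain_cost by (simp add: cInf_lower chain_cost_def)
qed

lemma chain_cost_ge_potential_diff:
  assumes inv: "\<And>p q. (p, q) \<in> E \<Longrightarrow> \<phi> p = \<phi> q"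
    and lip: "\<And>p q. p \<in> P \<Longrightarrow> q \<in> P \<Longrightarrow> \<phi> p - \<phi> q \<le> d p q"
  shows "quot_chain E P A B cs \<Longrightarrow> \<phi> (fst (hd cs)) - \<phi> (snd (last cs)) \<le> chain_cost d cs"
proof (induction cs arbitrary: A)
  case Nil
  then show ?case by (simp add: quot_chain_def)
next
  case (Cons c cs)
  have c: "fst c \<in> P" "snd c \<in> P"
    using Cons.prems by (auto simp: quot_chain_def)
  show ?case
  proof (cases "cs = []")
    case True
    then show ?thesis using lip[OF c] by (simp add: chain_cost_def case_prod_beta)
  next
    case False
    have "quot_chain E P {fst (hd cs)} B cs"
      using Cons.prems False unfolding quot_chain_def by (auto simp: hd_conv_nth)
    then have "\<phi> (fst (hd cs)) - \<phi> (snd (last cs)) \<le> chain_cost d cs"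
      by (rule Cons.IH)
    moreover have "\<phi> (snd c) = \<phi> (fst (hd cs))"
      using Cons.prems False inv unfolding quot_chain_def by (fastforce simp: hd_conv_nth)
    ultimately show ?thesis
      using lip[OF c] False by (simp add: chain_cost_def case_prod_beta)
  qed
qed

lemma quot_dist_ge_potential_diff:
  assumes inv: "\<And>p q. (p, q) \<in> E \<Longrightarrow> \<phi> p = \<phi> q"
    and lip: "\<And>p q. p \<in> P \<Longrightarrow> q \<in> P \<Longrightarrow> \<phi> p - \<phi> q \<le> d p q"
    and A: "\<And>p. p \<in> A \<Longrightarrow> \<phi> p = \<alpha>" and B: "\<And>q. q \<in> B \<Longrightarrow> \<phi> q = \<beta>"
    and "a \<in> A \<inter> P" "b \<in> B \<inter> P"
  shows "\<alpha> - \<beta> \<le> quot_dist d E P A B"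
  unfolding quot_dist_eq_Inf_chain_cost
proof (rule cInf_greatest)
  show "chain_cost d ` Collect (quot_chain E P A B) \<noteq> {}"
    using quot_chain_singleton[OF assms(5,6)] by blast
next
  fix s assume "s \<in> chain_cost d ` Collect (quot_chain E P A B)"
  then obtain cs where cs: "quot_chain E P A B cs" and s: "s = chain_cost d cs" by blast
  have "\<phi> (fst (hd cs)) = \<alpha>" "\<phi> (snd (last cs)) = \<beta>"
    using cs A B by (auto simp: quot_chain_def)
  moreover have "\<phi> (fst (hd cs)) - \<phi> (snd (last cs)) \<le> chain_cost d cs"
    by (rule chain_cost_ge_potential_diff[OF inv lip cs])
  ultimately show "\<alpha> - \<beta> \<le> s"
    using s by simp
qed

lemma glue_eq_refl: "p \<in> prod_carrier X \<Longrightarrow> (p, p) \<in> glue_eq X"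
  unfolding glue_eq_def by blast

lemma in_tens: "x \<in> tcarrier X \<Longrightarrow> (m, x) \<in> tens X m x"
  unfolding tens_def by (simp add: glue_eq_refl prod_carrier_def)

lemma tens_in_Fobj: "x \<in> tcarrier X \<Longrightarrow> tens X m x \<in> tcarrier (Fobj X)"
  unfolding Fobj_def tens_def by (simp add: quotientI prod_carrier_def)

lemma in_Fmap_tens:
  "x \<in> tcarrier X \<Longrightarrow> f x \<in> tcarrier Y \<Longrightarrow> (m, f x) \<in> Fmap Y f (tens X m x)"
  unfolding Fmap_def using in_tens[of x X m] in_tens[of "f x" Y m] unfolding tens_def by force

lemma prod_dist_nonneg:
  "is_tpms X \<Longrightarrow> p \<in> prod_carrier X \<Longrightarrow> q \<in> prod_carrier X \<Longrightarrow> 0 \<le> prod_dist X p q"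
  by (auto simp: prod_dist_def prod_carrier_def tdist_nonneg)

lemma prod_dist_le_1:
  "is_tpms X \<Longrightarrow> p \<in> prod_carrier X \<Longrightarrow> q \<in> prod_carrier X \<Longrightarrow> prod_dist X p q \<le> 1"
  using tdist_le_1[of X "snd p" "snd q"] by (auto simp: prod_dist_def prod_carrier_def)

lemma tdist_Fobj_tens_le:
  assumes "is_tpms X" "x \<in> tcarrier X" "y \<in> tcarrier X"
  shows "tdist (Fobj X) (tens X m x) (tens X n y) \<le> prod_dist X (m, x) (n, y)"
proof -
  have "quot_dist (prod_dist X) (glue_eq X) (prod_carrier X) (tens X m x) (tens X n y)
      \<le> prod_dist X (m, x) (n, y)"
    using assms by (intro quot_dist_le prod_dist_nonneg) (auto simp: in_tens prod_carrier_def)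
  then show ?thesis by (simp add: Fobj_def)
qed

text \<open>The glued points \<open>(a, L)\<close> and \<open>(a, R)\<close> lie at distance \<open>1\<close> from \<open>T\<close>, so their value
  \<open>1/2\<close> agrees with the constant value on the copies \<open>b\<close> and \<open>c\<close>.\<close>

definition aT_potential :: "'a tpms \<Rightarrow> m3 \<times> 'a \<Rightarrow> real" where
  "aT_potential X p = (if fst p = Ma then tdist X (snd p) (pT X) / 2 else 1 / 2)"

lemma aT_potential_glue_eq:
  assumes X: "is_tpms X" and pq: "(p, q) \<in> glue_eq X"
  shows "aT_potential X p = aT_potential X q"
proof -
  have glue: "aT_potential X p = aT_potential X q" if "(p, q) \<in> glue X \<union> (glue X)\<inverse>" for p q
    using that by (auto simp: glue_def aT_potential_def tdist_pL_pT[OF X] tdist_pR_pT[OF X])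
  from pq consider "p = q" | "(p, q) \<in> (glue X \<union> (glue X)\<inverse>)\<^sup>+"
    unfolding glue_eq_def by blast
  then show ?thesis
  proof cases
    case 2
    then show ?thesis
    proof (induction rule: trancl_induct)
      case (step q r)
      then show ?case using glue by metis
    qed (rule glue)
  qed simp
qed

lemma aT_potential_diff_le:
  assumes X: "is_tpms X" and "p \<in> prod_carrier X" "q \<in> prod_carrier X"
  shows "aT_potential X p - aT_potential X q \<le> prod_dist X p q"
proof -
  obtain m x n y where pq: "p = (m, x)" "q = (n, y)" and x: "x \<in> tcarrier X" and y: "y \<in> tcarrier X"
    using assms by (auto simp: prod_carrier_def)
  note T = tpms_pT_in[OF X]
  have "tdist X x (pT X) \<le> tdist X x y + tdist X y (pT X)"
    using tdist_triangle[OF X x y T] .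
  then show ?thesis
    using tdist_nonneg[OF X x y] tdist_nonneg[OF X x T] tdist_nonneg[OF X y T]
      tdist_le_1[OF X x T] tdist_le_1[OF X y T]
    unfolding pq aT_potential_def prod_dist_def by auto
qed

lemma tdist_Fobj_pT_ge:
  assumes X: "is_tpms X" and C: "C \<in> tcarrier (Fobj X)" and y: "y \<in> tcarrier X" "(Ma, y) \<in> C"
  shows "tdist X y (pT X) / 2 \<le> tdist (Fobj X) C (pT (Fobj X))"
proof -
  obtain p where C_eq: "C = glue_eq X `` {p}"
    using C by (auto simp: Fobj_def elim: quotientE)
  have on_C: "aT_potential X q = tdist X y (pT X) / 2" if "q \<in> C" for q
  proof -
    have "aT_potential X q = aT_potential X p" "aT_potential X (Ma, y) = aT_potential X p"
      using aT_potential_glue_eq[OF X] that y(2) unfolding C_eq by (metis Image_singleton_iff)+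
    then show ?thesis by (simp add: aT_potential_def)
  qed
  have on_aT: "aT_potential X q = 0" if "q \<in> tens X Ma (pT X)" for q
  proof -
    have "aT_potential X q = aT_potential X (Ma, pT X)"
      using aT_potential_glue_eq[OF X] that unfolding tens_def by (metis Image_singleton_iff)
    then show ?thesis by (simp add: aT_potential_def tdist_self[OF X tpms_pT_in[OF X]])
  qed
  have "tdist X y (pT X) / 2 - 0
      \<le> quot_dist (prod_dist X) (glue_eq X) (prod_carrier X) C (tens X Ma (pT X))"
  proof (rule quot_dist_ge_potential_diff[where \<phi> = "aT_potential X"])
    show "(Ma, y) \<in> C \<inter> prod_carrier X" "(Ma, pT X) \<in> tens X Ma (pT X) \<inter> prod_carrier X"
      using y tpms_pT_in[OF X] by (auto simp: in_tens prod_carrier_def)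
  qed (use aT_potential_glue_eq[OF X] aT_potential_diff_le[OF X] on_C on_aT in auto)
  then show ?thesis by (simp add: Fobj_def)
qed

lemma coalg_tdist_pT_step:
  assumes e: "coalg X e"
    and K: "\<forall>x\<in>tcarrier X. \<forall>y\<in>tcarrier X. tdist (Fobj X) (e x) (e y) \<le> K * tdist X x y"
    and y: "y \<in> tcarrier X" and z: "z \<in> tcarrier X" and "(Ma, y) \<in> e z"
  shows "tdist X y (pT X) / 2 \<le> K * tdist X z (pT X)"
proof -
  have X: "is_tpms X" and ez: "e z \<in> tcarrier (Fobj X)" and eT: "e (pT X) = pT (Fobj X)"
    using e z unfolding coalg_def lip_morph_def by auto
  have "tdist X y (pT X) / 2 \<le> tdist (Fobj X) (e z) (e (pT X))"
    using tdist_Fobj_pT_ge[OF X ez y] assms(5) eT by simp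
  also have "\<dots> \<le> K * tdist X z (pT X)"
    using K z tpms_pT_in[OF X] by blast
  finally show ?thesis .
qed

definition geom_points :: "real \<Rightarrow> real set" where
  "geom_points r = {0, 2} \<union> range (\<lambda>n. r ^ n)"

definition geom_dist :: "real \<Rightarrow> real \<Rightarrow> real" where
  "geom_dist s t = (if s = t then 0 else if s = 2 \<or> t = 2 then 1 else \<bar>s - t\<bar>)"

text \<open>The summand \<open>'x\<close> only lets the coalgebra live in the type over which \<^const>\<open>final_for\<close>
  quantifies.\<close>

definition geom_space :: "real \<Rightarrow> ('x + real) tpms" where
  "geom_space r = \<lparr>tcarrier = Inr ` geom_points r,
     tdist = (\<lambda>p q. case (p, q) of (Inr s, Inr t) \<Rightarrow> geom_dist s t | _ \<Rightarrow> 0),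
     pT = Inr 0, pL = Inr 1, pR = Inr 2\<rparr>"

text \<open>Division by \<open>r\<close> shifts \<open>r^(n+1)\<close> to \<open>r^n\<close> and fixes \<open>0 = T\<close>; the points \<open>L\<close> and \<open>R\<close>
  go to \<open>b \<otimes> L\<close> and \<open>c \<otimes> R\<close> as a morphism requires.\<close>

definition geom_struct :: "real \<Rightarrow> 'x + real \<Rightarrow> (m3 \<times> ('x + real)) set" where
  "geom_struct r p = (case p of
      Inr t \<Rightarrow> if t = 1 then tens (geom_space r) Mb (Inr 1)
        else if t = 2 then tens (geom_space r) Mc (Inr 2)
        else tens (geom_space r) Ma (Inr (t / r))
    | Inl _ \<Rightarrow> {})"

lemma geom_space_simps [simp]:
  "tcarrier (geom_space r) = Inr ` geom_points r"
  "tdist (geom_space r) (Inr s) (Inr t) = geom_dist s t"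
  "pT (geom_space r) = Inr 0" "pL (geom_space r) = Inr 1" "pR (geom_space r) = Inr 2"
  by (simp_all add: geom_space_def)

lemma geom_points_simps [simp]: "0 \<in> geom_points r" "1 \<in> geom_points r" "2 \<in> geom_points r"
  "r ^ n \<in> geom_points r"
  unfolding geom_points_def by (auto intro: range_eqI[of _ _ 0])

lemma geom_points_cases:
  assumes r: "0 < r" "r < 1" and s: "s \<in> geom_points r"
  shows "s = 1 \<or> s = 2 \<or> (0 \<le> s \<and> s \<le> r \<and> s / r \<in> geom_points r)"
proof -
  from s consider "s = 0" | "s = 2" | n where "s = r ^ n"
    unfolding geom_points_def by auto
  then show ?thesis
  proof cases
    case (3 n)
    show ?thesis
    proof (cases n)
      case (Suc k)
      have "r * r ^ k \<le> r"
        using r by (simp add: mult_left_le power_le_one)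
      then show ?thesis
        using 3 Suc r by simp
    qed (use 3 in simp)
  qed (use r in simp_all)
qed

lemma geom_points_range:
  "0 < r \<Longrightarrow> r < 1 \<Longrightarrow> s \<in> geom_points r \<Longrightarrow> s \<in> {0..1} \<union> {2}"
  using geom_points_cases[of r s] by auto

lemma
  assumes "s \<in> {0..1} \<union> {2}" "t \<in> {0..1} \<union> {2}" "u \<in> {0..1} \<union> {2}"
  shows geom_dist_nonneg: "0 \<le> geom_dist s t"
    and geom_dist_le_1: "geom_dist s t \<le> 1"
    and geom_dist_eq_0_iff: "geom_dist s t = 0 \<longleftrightarrow> s = t"
    and geom_dist_commute: "geom_dist s t = geom_dist t s"
    and geom_dist_triangle: "geom_dist s u \<le> geom_dist s t + geom_dist t u"
  using assms unfolding geom_dist_def by auto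

lemma geom_space_tpms:
  assumes "0 < r" "r < 1"
  shows "is_tpms (geom_space r)"
proof -
  have R: "s \<in> {0..1} \<union> {2}" if "s \<in> geom_points r" for s
    using geom_points_range[OF assms that] .
  have metric: "0 \<le> geom_dist s t \<and> geom_dist s t \<le> 1 \<and> (geom_dist s t = 0 \<longleftrightarrow> s = t) \<and>
      geom_dist s t = geom_dist t s \<and> geom_dist s u \<le> geom_dist s t + geom_dist t u"
    if "s \<in> geom_points r" "t \<in> geom_points r" "u \<in> geom_points r" for s t u
    using R[OF that(1)] R[OF that(2)] R[OF that(3)]
    by (simp add: geom_dist_nonneg geom_dist_le_1 geom_dist_eq_0_iff geom_dist_commute geom_dist_triangle)
  show ?thesis
    unfolding is_tpms_def using metric by (simp add: geom_dist_def)
qed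

lemma geom_struct_Ma:
  "s \<noteq> 1 \<Longrightarrow> s \<noteq> 2 \<Longrightarrow> geom_struct r (Inr s) = tens (geom_space r) Ma (Inr (s / r))"
  by (simp add: geom_struct_def)

lemma geom_struct_tens:
  assumes "0 < r" "r < 1" "s \<in> geom_points r"
  obtains m y where "y \<in> geom_points r" "geom_struct r (Inr s) = tens (geom_space r) m (Inr y)"
proof -
  from geom_points_cases[OF assms] consider "s = 1" | "s = 2" | "s \<noteq> 1" "s \<noteq> 2" "s / r \<in> geom_points r"
    by blast
  then show thesis
  proof cases
    case 1
    then show thesis by (intro that[of 1 Mb]) (simp_all add: geom_struct_def)
  next
    case 2
    then show thesis by (intro that[of 2 Mc]) (simp_all add: geom_struct_def)
  next
    case 3
    then show thesis by (intro that[of "s / r" Ma]) (simp_all add: geom_struct_Ma)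
  qed
qed

lemma geom_struct_Lipschitz:
  assumes r: "0 < r" "r \<le> 1 / 2" and s: "s \<in> geom_points r" and t: "t \<in> geom_points r"
  shows "tdist (Fobj (geom_space r)) (geom_struct r (Inr s :: 'x + real)) (geom_struct r (Inr t))
    \<le> geom_dist s t / r"
proof -
  let ?A = "geom_space r :: ('x + real) tpms"
  have r1: "r < 1" using r by simp
  have A: "is_tpms ?A" using geom_space_tpms[OF r(1) r1] .
  obtain m y where y: "y \<in> geom_points r" and sy: "geom_struct r (Inr s) = tens ?A m (Inr y)"
    using geom_struct_tens[OF r(1) r1 s] .
  obtain n z where z: "z \<in> geom_points r" and tz: "geom_struct r (Inr t) = tens ?A n (Inr z)"
    using geom_struct_tens[OF r(1) r1 t] .
  have le_prod: "tdist (Fobj ?A) (geom_struct r (Inr s)) (geom_struct r (Inr t))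
      \<le> prod_dist ?A (m, Inr y) (n, Inr z)"
    unfolding sy tz using A y z by (intro tdist_Fobj_tens_le) auto
  consider "s = t" | "s \<noteq> t" "s \<notin> {1, 2}" "t \<notin> {1, 2}" | "s \<noteq> t" "s \<in> {1, 2} \<or> t \<in> {1, 2}"
    by blast
  then show ?thesis
  proof cases
    case 1
    have "tdist (Fobj ?A) (geom_struct r (Inr s)) (geom_struct r (Inr s))
        \<le> prod_dist ?A (m, Inr y) (m, Inr y)"
      unfolding sy using A y by (intro tdist_Fobj_tens_le) auto
    then show ?thesis
      using 1 by (simp add: prod_dist_def geom_dist_def)
  next
    case 2
    have st: "0 \<le> s" "s \<le> r" "s / r \<in> geom_points r" "0 \<le> t" "t \<le> r" "t / r \<in> geom_points r"
      using 2 geom_points_cases[OF r(1) r1 s] geom_points_cases[OF r(1) r1 t] by auto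
    have "tdist (Fobj ?A) (geom_struct r (Inr s)) (geom_struct r (Inr t))
        = tdist (Fobj ?A) (tens ?A Ma (Inr (s / r))) (tens ?A Ma (Inr (t / r)))"
      using 2 by (simp add: geom_struct_Ma)
    also have "\<dots> \<le> prod_dist ?A (Ma, Inr (s / r)) (Ma, Inr (t / r))"
      using A st by (intro tdist_Fobj_tens_le) auto
    also have "\<dots> = \<bar>s / r - t / r\<bar> / 2"
    proof -
      have "s / r \<noteq> 2" "t / r \<noteq> 2" "s / r \<noteq> t / r"
        using r st 2 by (auto simp: field_simps)
      then show ?thesis
        by (simp add: prod_dist_def geom_dist_def)
    qed
    also have "\<dots> \<le> geom_dist s t / r"
      using r 2 by (simp add: geom_dist_def abs_divide diff_divide_distrib[symmetric] frac_le)
    finally show ?thesis .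
  next
    case 3
    have "1 / 2 \<le> geom_dist s t"
      using 3 geom_points_cases[OF r(1) r1 s] geom_points_cases[OF r(1) r1 t] r
      by (auto simp: geom_dist_def)
    then have "1 \<le> geom_dist s t / r"
      using r by (simp add: le_divide_eq)
    moreover have "prod_dist ?A (m, Inr y) (n, Inr z) \<le> 1"
      using A y z by (intro prod_dist_le_1) (auto simp: prod_carrier_def)
    ultimately show ?thesis
      using le_prod by linarith
  qed
qed

lemma geom_coalg:
  assumes r: "0 < r" "r \<le> 1 / 2"
  shows "coalg (geom_space r :: ('x + real) tpms) (geom_struct r)"
proof -
  let ?A = "geom_space r :: ('x + real) tpms"
  have r1: "r < 1" using r by simp
  have "geom_struct r (Inr s) \<in> tcarrier (Fobj ?A)" if s: "s \<in> geom_points r" for s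
  proof -
    obtain m y where "y \<in> geom_points r" "geom_struct r (Inr s) = tens ?A m (Inr y)"
      using geom_struct_tens[OF r(1) r1 s] .
    then show ?thesis by (simp add: tens_in_Fobj)
  qed
  then have "geom_struct r ` tcarrier ?A \<subseteq> tcarrier (Fobj ?A)"
    by auto
  moreover have "geom_struct r (pT ?A) = pT (Fobj ?A)" "geom_struct r (pL ?A) = pL (Fobj ?A)"
      "geom_struct r (pR ?A) = pR (Fobj ?A)"
    by (simp_all add: geom_struct_def Fobj_def)
  moreover have "\<forall>x\<in>tcarrier ?A. \<forall>y\<in>tcarrier ?A.
      tdist (Fobj ?A) (geom_struct r x) (geom_struct r y) \<le> (1 / r) * tdist ?A x y"
    using geom_struct_Lipschitz[OF r] by auto
  ultimately show ?thesis
    unfolding coalg_def lip_morph_def using geom_space_tpms[OF r(1) r1] by blast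
qed

lemma lip_morph_const_ge_1:
  assumes "is_tpms X" "lip_morph X Y f"
  obtains K where "K \<ge> 1" "\<forall>x\<in>tcarrier X. \<forall>y\<in>tcarrier X. tdist Y (f x) (f y) \<le> K * tdist X x y"
proof -
  obtain K where K: "\<forall>x\<in>tcarrier X. \<forall>y\<in>tcarrier X. tdist Y (f x) (f y) \<le> K * tdist X x y"
    using assms(2) unfolding lip_morph_def by blast
  have "tdist Y (f x) (f y) \<le> max K 1 * tdist X x y" if "x \<in> tcarrier X" "y \<in> tcarrier X" for x y
    using K that tdist_nonneg[OF assms(1) that] by (smt (verit) mult_right_mono max.cobounded1)
  then show thesis by (intro that[of "max K 1"]) auto
qed

lemma geom_orbit_lower_bound:
  assumes r: "0 < r" "r < 1" and e: "coalg X e" and "K > 0"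
    and K: "\<forall>x\<in>tcarrier X. \<forall>y\<in>tcarrier X. tdist (Fobj X) (e x) (e y) \<le> K * tdist X x y"
    and h: "coalg_morph (geom_space r) (geom_struct r) X e h"
  shows "(1 / (2 * K)) ^ n \<le> tdist X (h (Inr (r ^ n))) (pT X)"
proof (induction n)
  case 0
  have "h (Inr 1) = pL X"
    using h by (simp add: coalg_morph_def lip_morph_def)
  then show ?case
    using e by (simp add: coalg_def tdist_pL_pT)
next
  case (Suc n)
  have h_in: "h (Inr (r ^ k)) \<in> tcarrier X" for k
    using h by (auto simp: coalg_morph_def lip_morph_def)
  have "r ^ Suc n \<noteq> 1" "r ^ Suc n \<noteq> 2"
    using r power_strict_decreasing[of 0 "Suc n" r] by auto
  then have "geom_struct r (Inr (r ^ Suc n)) = tens (geom_space r) Ma (Inr (r ^ n))"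
    using r by (simp add: geom_struct_Ma)
  then have "e (h (Inr (r ^ Suc n))) = Fmap X h (tens (geom_space r) Ma (Inr (r ^ n)))"
    using h unfolding coalg_morph_def by (metis geom_points_simps(4) geom_space_simps(1) imageI)
  then have "(Ma, h (Inr (r ^ n))) \<in> e (h (Inr (r ^ Suc n)))"
    using in_Fmap_tens[of "Inr (r ^ n)" "geom_space r" h X Ma] h_in by simp
  then have step: "tdist X (h (Inr (r ^ n))) (pT X) / 2 \<le> K * tdist X (h (Inr (r ^ Suc n))) (pT X)"
    using coalg_tdist_pT_step[OF e K h_in h_in] by blast
  have "(1 / (2 * K)) ^ Suc n = (1 / (2 * K)) ^ n / (2 * K)"
    by (simp add: field_simps)
  also have "\<dots> \<le> tdist X (h (Inr (r ^ n))) (pT X) / (2 * K)"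
    using Suc.IH \<open>K > 0\<close> by (simp add: divide_right_mono)
  also have "\<dots> \<le> tdist X (h (Inr (r ^ Suc n))) (pT X)"
    using step \<open>K > 0\<close> by (simp add: field_simps)
  finally show ?case .
qed

lemma geom_orbit_upper_bound:
  assumes r: "0 < r" "r < 1" and h: "coalg_morph (geom_space r) (geom_struct r) X e h"
  obtains C where "\<And>n. tdist X (h (Inr (r ^ n))) (pT X) \<le> C * r ^ n"
proof -
  obtain C where C: "\<forall>x\<in>tcarrier (geom_space r). \<forall>y\<in>tcarrier (geom_space r).
      tdist X (h x) (h y) \<le> C * tdist (geom_space r) x y"
    using h unfolding coalg_morph_def lip_morph_def by blast
  have "h (Inr 0) = pT X"
    using h by (simp add: coalg_morph_def lip_morph_def)
  moreover have "geom_dist (r ^ n) 0 = r ^ n" for n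
    using r power_le_one[of r n] by (simp add: geom_dist_def)
  ultimately have "tdist X (h (Inr (r ^ n))) (pT X) \<le> C * r ^ n" for n
    using C by (metis geom_points_simps(1,4) geom_space_simps(1,2) image_eqI)
  then show thesis by (rule that)
qed

theorem mainTheorem12:
  fixes X :: "'a tpms" and e :: "'a \<Rightarrow> (m3 \<times> 'a) set"
  shows "\<not> final_for TYPE('a set + real) X e"
proof
  assume final: "final_for TYPE('a set + real) X e"
  then have e: "coalg X e"
    by (simp add: final_for_def)
  then obtain K where "K \<ge> 1"
    and K: "\<forall>x\<in>tcarrier X. \<forall>y\<in>tcarrier X. tdist (Fobj X) (e x) (e y) \<le> K * tdist X x y"
    unfolding coalg_def by (metis lip_morph_const_ge_1)
  define r where "r = 1 / (4 * K)"
  have r: "0 < r" "r \<le> 1 / 2" "r < 1"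
    using \<open>K \<ge> 1\<close> by (simp_all add: r_def field_simps)
  obtain h where h: "coalg_morph (geom_space r :: ('a set + real) tpms) (geom_struct r) X e h"
    using final geom_coalg[OF r(1,2)] unfolding final_for_def by blast
  obtain C where C: "\<And>n. tdist X (h (Inr (r ^ n))) (pT X) \<le> C * r ^ n"
    using geom_orbit_upper_bound[OF r(1,3) h] by blast
  have "2 ^ n \<le> C" for n
  proof -
    have "2 ^ n * r ^ n = (1 / (2 * K)) ^ n"
      by (simp add: r_def power_mult_distrib[symmetric])
    also have "\<dots> \<le> C * r ^ n"
      using geom_orbit_lower_bound[OF r(1,3) e _ K h] C[of n] \<open>K \<ge> 1\<close>
      by (meson order.trans zero_less_one order.strict_trans2)
    finally show ?thesis
      using r by simp
  qed
  then show False
    by (metis reals_Archimedean2 less_exp of_nat_less_numeral_power_cancel_iff not_less order.strict_trans)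
qed

end
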